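(* Let $n\equiv 3\pmod 4$ with $n>3$. Let $1\le r\le m$, let $M_r\in\mathfrak{C}_r$, and suppose $\det\tilde M_r>0$. If $E_m^*\in\mathfrak{E}_m$ satisfies $\det E_m^*=\max\{\det E: E\in\mathfrak{E}_m\}$, then $\det\tilde E_m^*>0$.
   Context: Fix an integer $n\equiv 3\pmod 4$, $n>3$. For $m\ge1$, $\mathfrak{C}_m$ is the set of symmetric positive definite $m\times m$ integer matrices $C=(c_{ij})$ with $c_{ii}=n$ and $c_{ij}\equiv n\pmod 4$ for all $i,j$. Given a fixed $M_r\in\mathfrak{C}_r$, for $m\ge r$, $\mathfrak{E}_m$ is the set of $E_m\in\mathfrak{C}_m$ whose leading $r\times r$ submatrix is $M_r$. For a square matrix $C$ of order $m$, $\tilde C$ denotes the matrix obtained from $C$ by replacing its $(m,m)$ entry by $3$. *)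

theory Defs
  imports Complex_Main "Jordan_Normal_Form.Determinant"
begin

definition pos_def_int :: "int mat \<Rightarrow> bool" where
  "pos_def_int C \<longleftrightarrow> C = transpose_mat C \<and>
     (\<forall>x \<in> carrier_vec (dim_row C). x \<noteq> 0\<^sub>v (dim_row C) \<longrightarrow>
        x \<bullet> (map_mat real_of_int C *\<^sub>v x) > (0::real))"

definition frakC :: "int \<Rightarrow> nat \<Rightarrow> int mat set" where
  "frakC n m = {C \<in> carrier_mat m m. pos_def_int C \<and>
      (\<forall>i<m. C $$ (i,i) = n) \<and>
      (\<forall>i<m. \<forall>j<m. C $$ (i,j) mod 4 = n mod 4)}"

definition frakE :: "int \<Rightarrow> int mat \<Rightarrow> nat \<Rightarrow> int mat set" where
  "frakE n Mr m = {E \<in> frakC n m.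
      \<forall>i<dim_row Mr. \<forall>j<dim_row Mr. E $$ (i,j) = Mr $$ (i,j)}"

definition tilde :: "int mat \<Rightarrow> int mat" where
  "tilde C = mat (dim_row C) (dim_col C)
     (\<lambda>(i,j). if i = dim_row C - 1 \<and> j = dim_col C - 1 then 3 else C $$ (i,j))"

end

theory Submission
  imports Defs
begin

text \<open>Let \<open>F\<close> maximise \<open>det\<close> on \<open>frakE n Mr k\<close> with \<open>det (tilde F) > 0\<close>, and
  let \<open>T\<close> arise from \<open>F\<close> by doubling its last index, the two copies being coupled by the
  entry 3. With \<open>F'\<close> the matrix \<open>F\<close> without its last row and column,
  \<open>det (tilde F) = det F - (n - 3) * det F' > 0\<close> yields the Schur-complement bound
  \<open>(n - 3) * x\<^sub>k\<^sup>2 \<le> x\<^sup>T F x\<close>, which is what makes \<open>T\<close> positive definite; so \<open>T\<close> lies in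
  \<open>frakE n Mr (k + 1)\<close>, and \<open>det (tilde T) = (n - 3) * det (tilde F)\<close>. A maximiser \<open>E\<close> of \<open>det\<close>
  on \<open>frakE n Mr (k + 1)\<close> then satisfies
  \<open>det (tilde E) = det E - (n - 3) * det E' \<ge> det T - (n - 3) * det F = det (tilde T) > 0\<close>.\<close>

section \<open>Quadratic forms of real matrices\<close>

definition quad_form :: "nat \<Rightarrow> real mat \<Rightarrow> (nat \<Rightarrow> real) \<Rightarrow> real" where
  "quad_form N M f = (\<Sum>i<N. \<Sum>j<N. f i * M $$ (i,j) * f j)"

definition bilin_form :: "nat \<Rightarrow> real mat \<Rightarrow> (nat \<Rightarrow> real) \<Rightarrow> (nat \<Rightarrow> real) \<Rightarrow> real" where
  "bilin_form N M f g = (\<Sum>i<N. \<Sum>j<N. f i * M $$ (i,j) * g j)"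

definition pos_def_form :: "nat \<Rightarrow> real mat \<Rightarrow> bool" where
  "pos_def_form N M \<longleftrightarrow> (\<forall>f. (\<exists>i<N. f i \<noteq> 0) \<longrightarrow> quad_form N M f > 0)"

lemma quad_form_cong: "(\<And>i. i < N \<Longrightarrow> f i = g i) \<Longrightarrow> quad_form N M f = quad_form N M g"
  unfolding quad_form_def by (intro sum.cong refl) auto

lemma scalar_prod_mult_mat_vec_eq_quad_form:
  assumes M: "M \<in> carrier_mat N N" and x: "x \<in> carrier_vec N"
  shows "x \<bullet> (M *\<^sub>v x) = quad_form N M (\<lambda>i. x $ i)"
proof -
  have "x \<bullet> (M *\<^sub>v x) = (\<Sum>i<N. x $ i * (\<Sum>j<N. M $$ (i,j) * x $ j))"
    using M x by (auto simp: atLeast0LessThan scalar_prod_def intro!: sum.cong)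
  also have "\<dots> = quad_form N M (\<lambda>i. x $ i)"
    unfolding quad_form_def by (simp add: sum_distrib_left mult.assoc)
  finally show ?thesis .
qed

lemma pos_def_form_iff:
  assumes M: "M \<in> carrier_mat N N"
  shows "pos_def_form N M \<longleftrightarrow> (\<forall>x\<in>carrier_vec N. x \<noteq> 0\<^sub>v N \<longrightarrow> x \<bullet> (M *\<^sub>v x) > 0)"
proof
  assume H: "pos_def_form N M"
  show "\<forall>x\<in>carrier_vec N. x \<noteq> 0\<^sub>v N \<longrightarrow> x \<bullet> (M *\<^sub>v x) > 0"
  proof (intro ballI impI)
    fix x :: "real vec" assume x: "x \<in> carrier_vec N" and "x \<noteq> 0\<^sub>v N"
    then have "\<exists>i<N. x $ i \<noteq> 0" by (metis eq_vecI index_zero_vec carrier_vecD)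
    with H show "x \<bullet> (M *\<^sub>v x) > 0"
      unfolding pos_def_form_def scalar_prod_mult_mat_vec_eq_quad_form[OF M x] by auto
  qed
next
  assume H: "\<forall>x\<in>carrier_vec N. x \<noteq> 0\<^sub>v N \<longrightarrow> x \<bullet> (M *\<^sub>v x) > 0"
  show "pos_def_form N M" unfolding pos_def_form_def
  proof (intro allI impI)
    fix f :: "nat \<Rightarrow> real" assume "\<exists>i<N. f i \<noteq> 0"
    then have "vec N f \<noteq> 0\<^sub>v N" by (metis index_vec index_zero_vec(1))
    then have "vec N f \<bullet> (M *\<^sub>v vec N f) > 0" using H by auto
    also have "vec N f \<bullet> (M *\<^sub>v vec N f) = quad_form N M f"
      using scalar_prod_mult_mat_vec_eq_quad_form[OF M, of "vec N f"] by (auto intro: quad_form_cong)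
    finally show "quad_form N M f > 0" .
  qed
qed

lemma pos_def_form_nonneg: "pos_def_form N M \<Longrightarrow> quad_form N M f \<ge> 0"
  unfolding pos_def_form_def quad_form_def by (cases "\<exists>i<N. f i \<noteq> 0") (auto simp: less_imp_le)

lemma quad_form_Suc:
  "quad_form (Suc N) M f = quad_form N M f + (\<Sum>i<N. f i * M $$ (i,N) * f N)
     + (\<Sum>j<N. f N * M $$ (N,j) * f j) + f N * M $$ (N,N) * f N"
  unfolding quad_form_def by (simp add: lessThan_Suc sum.distrib)

lemma quad_form_update:
  assumes l: "l < N"
  shows "quad_form N M (f(l := f l + t)) = quad_form N M f
     + t * (\<Sum>j<N. M $$ (l,j) * f j) + t * (\<Sum>i<N. f i * M $$ (i,l)) + t^2 * M $$ (l,l)"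
proof -
  have expand: "(f(l := f l + t)) i * M $$ (i,j) * (f(l := f l + t)) j = f i * M $$ (i,j) * f j
      + (if j = l then f i * M $$ (i,l) * t else 0) + (if i = l then t * M $$ (l,j) * f j else 0)
      + (if i = l then if j = l then t * M $$ (l,l) * t else 0 else 0)" for i j
    by (simp add: algebra_simps)
  have if_out: "(\<Sum>j<N. if P then h j else 0) = (if P then \<Sum>j<N. h j else 0)" for P and h :: "nat \<Rightarrow> real"
    by simp
  have "quad_form N M (f(l := f l + t)) = quad_form N M f + (\<Sum>i<N. f i * M $$ (i,l) * t)
      + (\<Sum>j<N. t * M $$ (l,j) * f j) + t * M $$ (l,l) * t"
    unfolding quad_form_def expand using l by (simp add: sum.distrib if_out)
  then show ?thesis by (simp add: sum_distrib_left sum_distrib_right power2_eq_square algebra_simps)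
qed

lemma quad_form_unit:
  assumes "i < N"
  shows "quad_form N M ((\<lambda>_. 0)(i := a)) = a^2 * M $$ (i,i)"
proof -
  have "quad_form N M (\<lambda>_. 0) = 0" unfolding quad_form_def by simp
  then show ?thesis using quad_form_update[OF assms, of M "\<lambda>_. 0" a] by simp
qed

lemma quad_form_two_point:
  assumes "i < N" "j < N" "i \<noteq> j" and sym: "M $$ (i,j) = M $$ (j,i)"
  shows "quad_form N M ((\<lambda>_. 0)(i := a, j := b))
    = a^2 * M $$ (i,i) + 2 * a * b * M $$ (i,j) + b^2 * M $$ (j,j)"
proof -
  let ?e = "(\<lambda>_. 0 :: real)(i := a)"
  have "(\<Sum>k<N. M $$ (j,k) * ?e k) = (\<Sum>k<N. if k = i then M $$ (j,i) * a else 0)"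
    by (intro sum.cong) auto
  moreover have "(\<Sum>k<N. ?e k * M $$ (k,j)) = (\<Sum>k<N. if k = i then a * M $$ (i,j) else 0)"
    by (intro sum.cong) auto
  ultimately show ?thesis
    using quad_form_update[OF \<open>j < N\<close>, of M ?e b] quad_form_unit[OF \<open>i < N\<close>, of M a]
      \<open>i < N\<close> \<open>i \<noteq> j\<close> sym
    by (simp add: power2_eq_square algebra_simps)
qed

lemma quad_form_mat_delete:
  assumes A: "A \<in> carrier_mat (Suc l) (Suc l)" and "f l = 0"
  shows "quad_form (Suc l) A f = quad_form l (mat_delete A l l) f"
proof -
  have "quad_form (Suc l) A f = quad_form l A f" using \<open>f l = 0\<close> unfolding quad_form_Suc by simp
  also have "\<dots> = quad_form l (mat_delete A l l) f"
    using A unfolding quad_form_def mat_delete_def by (intro sum.cong refl) auto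
  finally show ?thesis .
qed

lemma pos_def_form_mat_delete:
  assumes A: "A \<in> carrier_mat (Suc l) (Suc l)" and P: "pos_def_form (Suc l) A"
  shows "pos_def_form l (mat_delete A l l)"
  unfolding pos_def_form_def
proof (intro allI impI)
  fix f :: "nat \<Rightarrow> real" assume "\<exists>i<l. f i \<noteq> 0"
  then have "quad_form (Suc l) A (f(l := 0)) > 0"
    using P unfolding pos_def_form_def by (metis fun_upd_other less_Suc_eq nat_neq_iff)
  also have "quad_form (Suc l) A (f(l := 0)) = quad_form l (mat_delete A l l) f"
    by (subst quad_form_mat_delete[OF A]) (auto intro: quad_form_cong)
  finally show "quad_form l (mat_delete A l l) f > 0" .
qed

section \<open>Determinants of positive definite matrices\<close>

lemma sum_mult_cofactor:
  assumes M: "(M :: 'a :: comm_ring_1 mat) \<in> carrier_mat N N" and l: "l < N" and i: "i < N"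
  shows "(\<Sum>j<N. M $$ (i,j) * cofactor M l j) = (if i = l then det M else 0)"
proof -
  have "(\<Sum>j<N. M $$ (i,j) * cofactor M l j) = (M * adj_mat M) $$ (i,l)"
    using M l i adj_mat(1)[OF M]
    by (auto simp: adj_mat_def atLeast0LessThan scalar_prod_def intro!: sum.cong)
  also have "\<dots> = (det M \<cdot>\<^sub>m 1\<^sub>m N) $$ (i,l)" using adj_mat(2)[OF M] by simp
  finally show ?thesis using i l by simp
qed

lemma cofactor_diag_eq_det_mat_delete: "cofactor M l l = det (mat_delete M l l)"
  unfolding cofactor_def by (simp add: mult_2[symmetric])

lemma quad_form_cofactor_row:
  assumes M: "M \<in> carrier_mat (Suc l) (Suc l)"
  shows "quad_form (Suc l) M (cofactor M l) = det M * det (mat_delete M l l)"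
proof -
  have "quad_form (Suc l) M (cofactor M l)
      = (\<Sum>i<Suc l. cofactor M l i * (\<Sum>j<Suc l. M $$ (i,j) * cofactor M l j))"
    unfolding quad_form_def by (simp only: sum_distrib_left mult.assoc)
  also have "\<dots> = (\<Sum>i<Suc l. if i = l then cofactor M l l * det M else 0)"
    by (intro sum.cong refl) (subst sum_mult_cofactor[OF M], auto)
  also have "\<dots> = cofactor M l l * det M" by simp
  finally show ?thesis by (simp add: cofactor_diag_eq_det_mat_delete)
qed

lemma cofactor_row_nonzero:
  assumes M: "M \<in> carrier_mat (Suc l) (Suc l)" and "det M \<noteq> 0"
  shows "\<exists>i<Suc l. cofactor M l i \<noteq> 0"
proof (rule ccontr)
  assume "\<not> ?thesis"
  then have "(\<Sum>j<Suc l. M $$ (l,j) * cofactor M l j) = 0" by simp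
  with sum_mult_cofactor[OF M, of l l] \<open>det M \<noteq> 0\<close> show False by simp
qed

lemma pos_def_form_det_nonzero:
  assumes M: "M \<in> carrier_mat N N" and "pos_def_form N M"
  shows "det M \<noteq> 0"
proof
  assume "det M = 0"
  then obtain v where v: "v \<in> carrier_vec N" "v \<noteq> 0\<^sub>v N" "M *\<^sub>v v = 0\<^sub>v N"
    using det_0_iff_vec_prod_zero[OF M] by auto
  then have "v \<bullet> (M *\<^sub>v v) > 0" using \<open>pos_def_form N M\<close> pos_def_form_iff[OF M] by auto
  with v show False by simp
qed

lemma pos_def_form_det_pos: "M \<in> carrier_mat N N \<Longrightarrow> pos_def_form N M \<Longrightarrow> det M > 0"
proof (induction N arbitrary: M)
  case 0
  then have "M = 1\<^sub>m 0" by (intro eq_matI) auto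
  then show ?case by simp
next
  case (Suc l)
  note M = \<open>M \<in> carrier_mat (Suc l) (Suc l)\<close> and pd = \<open>pos_def_form (Suc l) M\<close>
  have "det (mat_delete M l l) > 0"
    using Suc.IH[OF _ pos_def_form_mat_delete[OF M pd]] mat_delete_carrier[OF M] by simp
  moreover have "quad_form (Suc l) M (cofactor M l) > 0"
    using pd cofactor_row_nonzero[OF M pos_def_form_det_nonzero[OF M pd]]
    unfolding pos_def_form_def by auto
  ultimately show ?case using quad_form_cofactor_row[OF M] by (simp add: zero_less_mult_iff)
qed

lemma quad_form_lin_comb:
  "quad_form N A (\<lambda>i. a * f i + b * g i)
     = a^2 * quad_form N A f + a * b * (bilin_form N A f g + bilin_form N A g f) + b^2 * quad_form N A g"
proof -
  have "quad_form N A (\<lambda>i. a * f i + b * g i)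
      = (\<Sum>i<N. \<Sum>j<N. a^2 * (f i * A$$(i,j) * f j) + a*b*(f i * A$$(i,j) * g j)
          + a*b*(g i * A$$(i,j) * f j) + b^2*(g i * A$$(i,j) * g j))"
    unfolding quad_form_def by (intro sum.cong refl) (simp add: algebra_simps power2_eq_square)
  also have "\<dots> = a^2 * quad_form N A f + a * b * bilin_form N A f g
      + a * b * bilin_form N A g f + b^2 * quad_form N A g"
    unfolding quad_form_def bilin_form_def by (simp only: sum.distrib sum_distrib_left)
  finally show ?thesis by (simp add: distrib_left)
qed

lemma bilin_form_commute:
  assumes "\<And>i j. i < N \<Longrightarrow> j < N \<Longrightarrow> A $$ (i,j) = A $$ (j,i)"
  shows "bilin_form N A f g = bilin_form N A g f"
  unfolding bilin_form_def
  by (subst sum.swap, intro sum.cong refl) (metis assms lessThan_iff mult.commute mult.assoc)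

text \<open>Cauchy--Schwarz for the form, paired with the cofactor vector of row \<open>l\<close>,
  whose image under \<open>A\<close> is \<open>det A\<close> times the \<open>l\<close>-th unit vector.\<close>
lemma det_mult_sq_le_quad_form:
  assumes A: "A \<in> carrier_mat (Suc l) (Suc l)"
    and sym: "\<And>i j. i < Suc l \<Longrightarrow> j < Suc l \<Longrightarrow> A $$ (i,j) = A $$ (j,i)"
    and pd: "pos_def_form (Suc l) A"
  shows "det A * (f l)^2 \<le> det (mat_delete A l l) * quad_form (Suc l) A f"
proof -
  let ?Q = "quad_form (Suc l) A" and ?u = "cofactor A l"
  define d where "d = det A"
  have d: "d > 0" unfolding d_def by (rule pos_def_form_det_pos[OF A pd])
  have Qu: "?Q ?u > 0"
    using pd cofactor_row_nonzero[OF A] d unfolding pos_def_form_def d_def by auto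
  have Bcomm: "bilin_form (Suc l) A ?u f = bilin_form (Suc l) A f ?u"
    by (rule bilin_form_commute[OF sym])
  also have "\<dots> = (\<Sum>i<Suc l. f i * (\<Sum>j<Suc l. A $$ (i,j) * ?u j))"
    unfolding bilin_form_def by (simp only: sum_distrib_left mult.assoc)
  also have "\<dots> = (\<Sum>i<Suc l. if i = l then f l * d else 0)"
    unfolding d_def by (intro sum.cong refl) (subst sum_mult_cofactor[OF A], auto)
  finally have Bu: "bilin_form (Suc l) A ?u f = d * f l" by simp
  have "0 \<le> ?Q (\<lambda>i. ?Q ?u * f i + (- bilin_form (Suc l) A ?u f) * ?u i)"
    by (rule pos_def_form_nonneg[OF pd])
  also have "\<dots> = ?Q ?u * (?Q ?u * ?Q f - (bilin_form (Suc l) A ?u f)^2)"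
    unfolding quad_form_lin_comb Bcomm
    by (simp add: algebra_simps power2_eq_square)
  finally have "(bilin_form (Suc l) A ?u f)^2 \<le> ?Q ?u * ?Q f"
    using Qu by (simp add: zero_le_mult_iff)
  then have "d * (d * (f l)^2) \<le> d * (det (mat_delete A l l) * ?Q f)"
    unfolding Bu quad_form_cofactor_row[OF A] d_def[symmetric] by (simp add: algebra_simps power2_eq_square)
  then show ?thesis using d unfolding d_def by simp
qed

lemma pos_def_form_last_coord_bound:
  assumes A: "A \<in> carrier_mat (Suc l) (Suc l)"
    and sym: "\<And>i j. i < Suc l \<Longrightarrow> j < Suc l \<Longrightarrow> A $$ (i,j) = A $$ (j,i)"
    and pd: "pos_def_form (Suc l) A" and "c \<ge> 0"
    and det_gt: "det A - c * det (mat_delete A l l) > 0"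
  shows "c * (f l)^2 \<le> quad_form (Suc l) A f"
proof -
  have "det A * (c * (f l)^2) \<le> c * (det (mat_delete A l l) * quad_form (Suc l) A f)"
    using mult_left_mono[OF det_mult_sq_le_quad_form[OF A sym pd] \<open>c \<ge> 0\<close>] by (simp add: ac_simps)
  also have "\<dots> \<le> det A * quad_form (Suc l) A f"
    using det_gt pos_def_form_nonneg[OF pd] by (simp add: mult_right_mono flip: mult.assoc)
  finally show ?thesis using pos_def_form_det_pos[OF A pd] by simp
qed

section \<open>Modifying the last index\<close>

lemma map_mat_mat_delete:
  "map_mat f (mat_delete A i j) = mat_delete (map_mat f A) i j"
  unfolding mat_delete_def by (intro eq_matI) auto

definition set_last_diag :: "'a mat \<Rightarrow> 'a \<Rightarrow> 'a mat" where
  "set_last_diag C a = mat (dim_row C) (dim_col C)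
     (\<lambda>(i,j). if i = dim_row C - 1 \<and> j = dim_col C - 1 then a else C $$ (i,j))"

lemma tilde_eq_set_last_diag: "tilde C = set_last_diag C 3"
  unfolding tilde_def set_last_diag_def by simp

lemma set_last_diag_index:
  assumes "C \<in> carrier_mat (Suc k) (Suc k)" "i < Suc k" "j < Suc k"
  shows "set_last_diag C a $$ (i,j) = (if i = k \<and> j = k then a else C $$ (i,j))"
  using assms unfolding set_last_diag_def by (simp add: carrier_matD)

lemma det_set_last_diag:
  fixes C :: "'a :: comm_ring_1 mat"
  assumes C: "C \<in> carrier_mat (Suc k) (Suc k)"
  shows "det (set_last_diag C a) = det C + (a - C $$ (k,k)) * det (mat_delete C k k)"
proof -
  have S: "set_last_diag C a \<in> carrier_mat (Suc k) (Suc k)"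
    using C unfolding set_last_diag_def by auto
  have "mat_delete (set_last_diag C a) i k = mat_delete C i k" for i
    using C unfolding mat_delete_def set_last_diag_def by (intro eq_matI) auto
  then have cof: "cofactor (set_last_diag C a) i k = cofactor C i k" for i
    unfolding cofactor_def by simp
  have "det (set_last_diag C a) = (\<Sum>i<Suc k. set_last_diag C a $$ (i,k) * cofactor C i k)"
    using laplace_expansion_column[OF S, of k] by (simp add: cof)
  also have "\<dots> = (\<Sum>i<k. C $$ (i,k) * cofactor C i k) + a * cofactor C k k"
    using C unfolding set_last_diag_def by (simp add: lessThan_Suc)
  moreover have "det C = (\<Sum>i<k. C $$ (i,k) * cofactor C i k) + C $$ (k,k) * cofactor C k k"
    using laplace_expansion_column[OF C, of k] by (simp add: lessThan_Suc)
  ultimately show ?thesis by (simp add: cofactor_diag_eq_det_mat_delete algebra_simps)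
qed

text \<open>The last index of \<open>F\<close> is doubled, and the two copies are coupled by the entry 3.\<close>
definition twin_ext :: "'a :: numeral mat \<Rightarrow> 'a mat" where
  "twin_ext F = (let l = dim_row F - 1 in mat (Suc (dim_row F)) (Suc (dim_row F)) (\<lambda>(i,j).
     if i = l \<and> j = Suc l \<or> i = Suc l \<and> j = l then 3 else F $$ (min i l, min j l)))"

lemma twin_ext_carrier:
  "F \<in> carrier_mat (Suc l) (Suc l) \<Longrightarrow> twin_ext F \<in> carrier_mat (Suc (Suc l)) (Suc (Suc l))"
  unfolding twin_ext_def Let_def by (simp add: carrier_matD)

lemma twin_ext_index:
  assumes "F \<in> carrier_mat (Suc l) (Suc l)" "i < Suc (Suc l)" "j < Suc (Suc l)"
  shows "twin_ext F $$ (i,j) =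
    (if i = l \<and> j = Suc l \<or> i = Suc l \<and> j = l then 3 else F $$ (min i l, min j l))"
  using assms unfolding twin_ext_def Let_def by (simp add: carrier_matD)

lemma twin_ext_entries:
  assumes F: "F \<in> carrier_mat (Suc l) (Suc l)"
  shows "i < Suc l \<Longrightarrow> j < Suc l \<Longrightarrow> twin_ext F $$ (i,j) = F $$ (i,j)"
    and "i < Suc l \<Longrightarrow> twin_ext F $$ (i, Suc l) = (if i = l then 3 else F $$ (i,l))"
    and "j < Suc l \<Longrightarrow> twin_ext F $$ (Suc l, j) = (if j = l then 3 else F $$ (l,j))"
    and "twin_ext F $$ (Suc l, Suc l) = F $$ (l,l)"
  by (simp_all add: twin_ext_index[OF F] min_def)

lemma mat_delete_twin_ext:
  assumes F: "F \<in> carrier_mat (Suc l) (Suc l)"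
  shows "mat_delete (twin_ext F) (Suc l) (Suc l) = F"
  using F twin_ext_carrier[OF F]
  by (intro eq_matI) (simp_all add: mat_delete_def twin_ext_entries(1)[OF F] carrier_matD)

lemma map_mat_twin_ext:
  assumes F: "F \<in> carrier_mat (Suc l) (Suc l)"
  shows "map_mat real_of_int (twin_ext F) = twin_ext (map_mat real_of_int F)"
proof -
  have F': "map_mat real_of_int F \<in> carrier_mat (Suc l) (Suc l)" using F by simp
  show ?thesis using F twin_ext_carrier[OF F] twin_ext_carrier[OF F']
    by (intro eq_matI)
      (simp_all add: twin_ext_index[OF F] twin_ext_index[OF F'] carrier_matD min_less_iff_disj)
qed

text \<open>Subtracting the last row from row \<open>l\<close> leaves \<open>F $$ (l,l) - 3\<close> as the only nonzero
  entry of row \<open>l\<close>.\<close>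
lemma det_set_last_diag_twin_ext:
  fixes F :: "'a :: comm_ring_1 mat"
  assumes F: "F \<in> carrier_mat (Suc l) (Suc l)"
  shows "det (set_last_diag (twin_ext F) 3) = (F $$ (l,l) - 3) * det (set_last_diag F 3)"
proof -
  let ?M = "set_last_diag (twin_ext F) 3" and ?c = "F $$ (l,l)"
  have M: "?M \<in> carrier_mat (Suc (Suc l)) (Suc (Suc l))"
    using twin_ext_carrier[OF F] unfolding set_last_diag_def by (simp add: carrier_matD)
  note M_idx = set_last_diag_index[OF twin_ext_carrier[OF F]]
  define G where "G = addrow (-1) l (Suc l) ?M"
  have G: "G \<in> carrier_mat (Suc (Suc l)) (Suc (Suc l))" using M unfolding G_def by auto
  have G_idx: "G $$ (i,j) = (if i = l then ?M $$ (l,j) - ?M $$ (Suc l,j) else ?M $$ (i,j))"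
    if "i < Suc (Suc l)" "j < Suc (Suc l)" for i j
    using that M unfolding G_def by (simp add: carrier_matD)
  have "det ?M = det G" unfolding G_def by (rule det_addrow[OF _ _ M, symmetric]) auto
  also have "\<dots> = (\<Sum>j<Suc (Suc l). G $$ (l,j) * cofactor G l j)"
    by (rule laplace_expansion_row[OF G]) simp
  also have "\<dots> = (\<Sum>j<Suc (Suc l). if j = l then (?c - 3) * cofactor G l l else 0)"
  proof (rule sum.cong[OF refl])
    fix j assume "j \<in> {..<Suc (Suc l)}"
    then consider "j < Suc l" | "j = Suc l" by fastforce
    then have "G $$ (l,j) = (if j = l then ?c - 3 else 0)"
      by cases (simp_all add: G_idx M_idx twin_ext_entries[OF F])
    then show "G $$ (l,j) * cofactor G l j = (if j = l then (?c - 3) * cofactor G l l else 0)"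
      by simp
  qed
  also have "\<dots> = (?c - 3) * det (mat_delete G l l)"
    by (simp add: cofactor_diag_eq_det_mat_delete)
  also have "mat_delete G l l = set_last_diag F 3"
  proof (rule eq_matI)
    fix i j assume "i < dim_row (set_last_diag F 3)" "j < dim_col (set_last_diag F 3)"
    then have ij: "i < Suc l" "j < Suc l" using F by (simp_all add: set_last_diag_def carrier_matD)
    have "mat_delete G l l $$ (i,j) = G $$ (if i < l then i else Suc i, if j < l then j else Suc j)"
      using ij G by (simp add: mat_delete_def carrier_matD)
    also have "\<dots> = set_last_diag F 3 $$ (i,j)"
      using ij by (cases "i < l"; cases "j < l")
        (simp_all add: G_idx M_idx twin_ext_entries[OF F] set_last_diag_index[OF F] not_less_less_Suc_eq)
    finally show "mat_delete G l l $$ (i,j) = set_last_diag F 3 $$ (i,j)" .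
  qed (use F G in \<open>simp_all add: set_last_diag_def carrier_matD\<close>)
  finally show ?thesis .
qed

text \<open>The right-hand side is arranged so that the bound \<open>(c - 3) * (g l)\<^sup>2 \<le> quad_form (Suc l) F g\<close>
  leaves \<open>(c - 3) * ((f l)\<^sup>2 + t\<^sup>2)\<close>.\<close>
lemma quad_form_twin_ext:
  fixes F :: "real mat" and f :: "nat \<Rightarrow> real"
  assumes F: "F \<in> carrier_mat (Suc l) (Suc l)"
  defines "c \<equiv> F $$ (l,l)" and "t \<equiv> f (Suc l)"
  shows "quad_form (Suc (Suc l)) (twin_ext F) f = quad_form (Suc l) F (f(l := f l + t))
    - (c - 3) * (f l + t)^2 + (c - 3) * (f l)^2 + (c - 3) * t^2"
proof -
  let ?E = "twin_ext F"
  have S0: "quad_form (Suc l) ?E f = quad_form (Suc l) F f"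
    unfolding quad_form_def by (intro sum.cong refl) (simp add: twin_ext_entries[OF F])
  have S1: "(\<Sum>i<Suc l. f i * ?E $$ (i,Suc l) * t)
      = t * (\<Sum>i<Suc l. f i * F $$ (i,l)) - (c - 3) * f l * t"
  proof -
    have "(\<Sum>i<Suc l. f i * ?E $$ (i,Suc l) * t)
        = (\<Sum>i<Suc l. t * (f i * F $$ (i,l)) - (if i = l then (c - 3) * f l * t else 0))"
      by (intro sum.cong refl) (auto simp: twin_ext_entries[OF F] c_def algebra_simps)
    also have "\<dots> = t * (\<Sum>i<Suc l. f i * F $$ (i,l)) - (c - 3) * f l * t"
      by (simp only: sum_subtractf sum_distrib_left[symmetric]) simp
    finally show ?thesis .
  qed
  have S2: "(\<Sum>j<Suc l. t * ?E $$ (Suc l,j) * f j)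
      = t * (\<Sum>j<Suc l. F $$ (l,j) * f j) - (c - 3) * f l * t"
  proof -
    have "(\<Sum>j<Suc l. t * ?E $$ (Suc l,j) * f j)
        = (\<Sum>j<Suc l. t * (F $$ (l,j) * f j) - (if j = l then (c - 3) * f l * t else 0))"
      by (intro sum.cong refl) (auto simp: twin_ext_entries[OF F] c_def algebra_simps)
    also have "\<dots> = t * (\<Sum>j<Suc l. F $$ (l,j) * f j) - (c - 3) * f l * t"
      by (simp only: sum_subtractf sum_distrib_left[symmetric]) simp
    finally show ?thesis .
  qed
  have "quad_form (Suc (Suc l)) ?E f = quad_form (Suc l) F f
      + (t * (\<Sum>i<Suc l. f i * F $$ (i,l)) - (c - 3) * f l * t)
      + (t * (\<Sum>j<Suc l. F $$ (l,j) * f j) - (c - 3) * f l * t) + t * c * t"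
    using quad_form_Suc[of "Suc l" ?E f]
    unfolding t_def[symmetric] S0 S1 S2 twin_ext_entries(4)[OF F] c_def[symmetric] .
  then show ?thesis
    unfolding quad_form_update[of l "Suc l", OF lessI] c_def[symmetric]
    by (simp add: algebra_simps power2_eq_square)
qed

lemma pos_def_form_twin_ext:
  fixes F :: "real mat"
  assumes F: "F \<in> carrier_mat (Suc l) (Suc l)" and c: "F $$ (l,l) > 3"
    and pd: "pos_def_form (Suc l) F"
    and bound: "\<And>g. (F $$ (l,l) - 3) * (g l)^2 \<le> quad_form (Suc l) F g"
  shows "pos_def_form (Suc (Suc l)) (twin_ext F)"
  unfolding pos_def_form_def
proof (intro allI impI)
  fix f :: "nat \<Rightarrow> real" assume nz: "\<exists>i<Suc (Suc l). f i \<noteq> 0"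
  let ?c = "F $$ (l,l)" and ?t = "f (Suc l)"
  note eq = quad_form_twin_ext[OF F, of f]
  show "quad_form (Suc (Suc l)) (twin_ext F) f > 0"
  proof (cases "?t = 0 \<and> f l = 0")
    case False
    then have "(?c - 3) * (f l)^2 + (?c - 3) * ?t^2 > 0"
      using c by (auto intro: add_pos_nonneg add_nonneg_pos)
    with eq bound[of "f(l := f l + ?t)"] show ?thesis by simp
  next
    case True
    then obtain i where "i < Suc l" "f i \<noteq> 0" using nz by (metis less_Suc_eq)
    then have "quad_form (Suc l) F f > 0" using pd unfolding pos_def_form_def by auto
    with eq True show ?thesis by (simp add: fun_upd_idem)
  qed
qed

section \<open>The sets \<open>C\<^sub>m\<close> and \<open>E\<^sub>m\<close>\<close>

lemma eq_transpose_mat_iff: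
  assumes "C \<in> carrier_mat m m"
  shows "C = transpose_mat C \<longleftrightarrow> (\<forall>i<m. \<forall>j<m. C $$ (i,j) = C $$ (j,i))"
  using assms by (auto simp: mat_eq_iff)

lemma mem_frakC_iff:
  "C \<in> frakC n m \<longleftrightarrow> C \<in> carrier_mat m m \<and> (\<forall>i<m. \<forall>j<m. C $$ (i,j) = C $$ (j,i))
     \<and> pos_def_form m (map_mat real_of_int C) \<and> (\<forall>i<m. C $$ (i,i) = n)
     \<and> (\<forall>i<m. \<forall>j<m. C $$ (i,j) mod 4 = n mod 4)"
proof (cases "C \<in> carrier_mat m m")
  case True
  then have R: "map_mat real_of_int C \<in> carrier_mat m m" by simp
  have "C \<in> frakC n m \<longleftrightarrow> (C = transpose_mat C
      \<and> (\<forall>x\<in>carrier_vec m. x \<noteq> 0\<^sub>v m \<longrightarrow> x \<bullet> (map_mat real_of_int C *\<^sub>v x) > 0))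
      \<and> (\<forall>i<m. C $$ (i,i) = n) \<and> (\<forall>i<m. \<forall>j<m. C $$ (i,j) mod 4 = n mod 4)"
    unfolding frakC_def pos_def_int_def using True by (simp add: carrier_matD)
  then show ?thesis
    unfolding eq_transpose_mat_iff[OF True] pos_def_form_iff[OF R, symmetric] using True by blast
qed (simp add: frakC_def)

lemma mem_frakE_iff:
  "E \<in> frakE n Mr m \<longleftrightarrow> E \<in> frakC n m \<and> (\<forall>i<dim_row Mr. \<forall>j<dim_row Mr. E $$ (i,j) = Mr $$ (i,j))"
  unfolding frakE_def by simp

lemma abs_entry_le_frakC:
  assumes C: "C \<in> frakC n m" and "i < m" "j < m"
  shows "\<bar>C $$ (i,j)\<bar> \<le> n"
proof -
  let ?R = "map_mat real_of_int C"
  from C have Cc: "C \<in> carrier_mat m m" and pd: "pos_def_form m ?R"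
    and sym: "C $$ (i,j) = C $$ (j,i)" and diag: "C $$ (i,i) = n" "C $$ (j,j) = n"
    using \<open>i < m\<close> \<open>j < m\<close> unfolding mem_frakC_iff by auto
  show ?thesis
  proof (cases "i = j")
    case True
    have "quad_form m ?R ((\<lambda>_. 0)(i := 1)) > 0"
      using pd \<open>i < m\<close> unfolding pos_def_form_def by (metis fun_upd_same one_neq_zero)
    then show ?thesis using quad_form_unit[OF \<open>i < m\<close>] Cc diag True \<open>i < m\<close> by simp
  next
    case False
    have val: "quad_form m ?R ((\<lambda>_. 0)(i := 1, j := s)) = 2 * n + 2 * s * C $$ (i,j)"
      if "s\<^sup>2 = 1" for s :: real
      using quad_form_two_point[OF \<open>i < m\<close> \<open>j < m\<close> False, of ?R 1 s] that Cc sym diag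
        \<open>i < m\<close> \<open>j < m\<close> by simp
    have pos: "quad_form m ?R ((\<lambda>_. 0)(i := 1, j := s)) > 0" for s :: real
    proof -
      have "((\<lambda>_. 0)(i := 1, j := s)) i \<noteq> (0::real)" using False by simp
      then show ?thesis using pd \<open>i < m\<close> unfolding pos_def_form_def by blast
    qed
    have "(0::real) < of_int (n + C $$ (i,j))" "(0::real) < of_int (n - C $$ (i,j))"
      using val[of 1] pos[of 1] val[of "-1"] pos[of "-1"] by simp_all
    then show ?thesis by (simp add: abs_le_iff)
  qed
qed

lemma finite_frakE: "finite (frakE n Mr m)"
proof -
  let ?B = "{C \<in> carrier_mat m m. \<forall>i<m. \<forall>j<m. C $$ (i,j) \<in> {-n..n}}"
  let ?h = "\<lambda>C :: int mat. restrict (\<lambda>p. C $$ p) ({0..<m} \<times> {0..<m})"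
  have "frakE n Mr m \<subseteq> ?B"
  proof
    fix C assume "C \<in> frakE n Mr m"
    then have C: "C \<in> frakC n m" by (simp add: mem_frakE_iff)
    have "C $$ (i,j) \<in> {-n..n}" if "i < m" "j < m" for i j
      using abs_entry_le_frakC[OF C that] by (simp add: abs_le_iff)
    then show "C \<in> ?B" using C unfolding mem_frakC_iff by blast
  qed
  moreover have "inj_on ?h ?B"
  proof (rule inj_onI)
    fix C D assume C: "C \<in> ?B" and D: "D \<in> ?B" and eq: "?h C = ?h D"
    show "C = D"
    proof (rule eq_matI)
      fix i j assume "i < dim_row D" "j < dim_col D"
      then have "(i,j) \<in> {0..<m} \<times> {0..<m}" using D by auto
      then show "C $$ (i,j) = D $$ (i,j)" using fun_cong[OF eq, of "(i,j)"] by simp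
    qed (use C D in auto)
  qed
  moreover have "?h ` ?B \<subseteq> PiE ({0..<m} \<times> {0..<m}) (\<lambda>_. {-n..n})"
    unfolding image_subset_iff restrict_PiE_iff by auto
  then have "finite (?h ` ?B)" by (rule finite_subset) (intro finite_PiE, auto)
  ultimately show ?thesis using finite_imageD finite_subset by blast
qed

lemma det_tilde_eq:
  assumes "E \<in> frakC n (Suc k)"
  shows "det (tilde E) = det E - (n - 3) * det (mat_delete E k k)"
proof -
  have "E \<in> carrier_mat (Suc k) (Suc k)" and "E $$ (k,k) = n"
    using assms unfolding mem_frakC_iff by auto
  then show ?thesis
    unfolding tilde_eq_set_last_diag by (simp add: det_set_last_diag algebra_simps)
qed

lemma mat_delete_mem_frakE:
  assumes E: "E \<in> frakE n Mr (Suc k)" and "dim_row Mr \<le> k"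
  shows "mat_delete E k k \<in> frakE n Mr k"
proof -
  from E have Ec: "E \<in> carrier_mat (Suc k) (Suc k)"
    and pd: "pos_def_form (Suc k) (map_mat real_of_int E)"
    unfolding mem_frakE_iff mem_frakC_iff by auto
  have "pos_def_form k (map_mat real_of_int (mat_delete E k k))"
    unfolding map_mat_mat_delete using Ec pd by (intro pos_def_form_mat_delete) auto
  moreover have "mat_delete E k k $$ (i,j) = E $$ (i,j)" if "i < k" "j < k" for i j
    using Ec that by (simp add: mat_delete_def carrier_matD)
  ultimately show ?thesis
    using E Ec \<open>dim_row Mr \<le> k\<close> unfolding mem_frakE_iff mem_frakC_iff
    by (auto simp: carrier_matD)
qed

lemma pos_def_form_twin_ext_of_det_tilde_pos:
  assumes "n > 3" and F: "F \<in> frakC n (Suc l)" and "det (tilde F) > 0"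
  shows "pos_def_form (Suc (Suc l)) (map_mat real_of_int (twin_ext F))"
proof -
  let ?R = "map_mat real_of_int F"
  from F have Fc: "F \<in> carrier_mat (Suc l) (Suc l)" and pd: "pos_def_form (Suc l) ?R"
    and sym: "\<forall>i<Suc l. \<forall>j<Suc l. F $$ (i,j) = F $$ (j,i)" and "F $$ (l,l) = n"
    unfolding mem_frakC_iff by auto
  then have R: "?R \<in> carrier_mat (Suc l) (Suc l)" and R_ll: "?R $$ (l,l) = n" by auto
  have "real_of_int (det (tilde F)) = det ?R - (real_of_int n - 3) * det (mat_delete ?R l l)"
    using det_tilde_eq[OF F] by (simp add: of_int_hom.hom_det flip: map_mat_mat_delete)
  then have "det ?R - (real_of_int n - 3) * det (mat_delete ?R l l) > 0"
    using \<open>det (tilde F) > 0\<close> by simp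
  then have "(real_of_int n - 3) * (g l)^2 \<le> quad_form (Suc l) ?R g" for g
    using Fc sym \<open>n > 3\<close> by (intro pos_def_form_last_coord_bound[OF R _ pd]) auto
  then show ?thesis
    using pos_def_form_twin_ext[OF R] R_ll \<open>n > 3\<close> pd by (simp add: map_mat_twin_ext[OF Fc])
qed

lemma twin_ext_mem_frakE:
  assumes "n mod 4 = 3" "n > 3" and F: "F \<in> frakE n Mr (Suc l)"
    and "dim_row Mr \<le> Suc l" and "det (tilde F) > 0"
  shows "twin_ext F \<in> frakE n Mr (Suc (Suc l))"
proof -
  from F have Fc: "F \<in> carrier_mat (Suc l) (Suc l)"
    and sym: "\<forall>i<Suc l. \<forall>j<Suc l. F $$ (i,j) = F $$ (j,i)"
    and diag: "\<forall>i<Suc l. F $$ (i,i) = n"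
    and cong: "\<forall>i<Suc l. \<forall>j<Suc l. F $$ (i,j) mod 4 = n mod 4"
    and lead: "\<forall>i<dim_row Mr. \<forall>j<dim_row Mr. F $$ (i,j) = Mr $$ (i,j)"
    unfolding mem_frakE_iff mem_frakC_iff by auto
  have T_pd: "pos_def_form (Suc (Suc l)) (map_mat real_of_int (twin_ext F))"
    using F \<open>n > 3\<close> \<open>det (tilde F) > 0\<close> unfolding mem_frakE_iff
    by (blast intro: pos_def_form_twin_ext_of_det_tilde_pos)
  have T_sym: "twin_ext F $$ (i,j) = twin_ext F $$ (j,i)"
    and T_diag: "twin_ext F $$ (i,i) = n" and T_cong: "twin_ext F $$ (i,j) mod 4 = n mod 4"
    if "i < Suc (Suc l)" "j < Suc (Suc l)" for i j
    using that sym[rule_format, of "min i l" "min j l"] diag[rule_format, of "min i l"]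
      cong[rule_format, of "min i l" "min j l"] \<open>n mod 4 = 3\<close>
    by (auto simp: twin_ext_index[OF Fc])
  have T_lead: "twin_ext F $$ (i,j) = Mr $$ (i,j)" if "i < dim_row Mr" "j < dim_row Mr" for i j
    using that lead[rule_format, of i j] \<open>dim_row Mr \<le> Suc l\<close>
    by (simp add: twin_ext_index[OF Fc])
  show ?thesis
    unfolding mem_frakE_iff mem_frakC_iff
    by (intro conjI allI impI; rule twin_ext_carrier[OF Fc] T_pd T_sym T_diag T_cong T_lead; simp)
qed

lemma frakE_eq_singleton:
  assumes Mr: "Mr \<in> frakC n r"
  shows "frakE n Mr r = {Mr}"
proof -
  have "E = Mr" if "E \<in> frakE n Mr r" for E
    using that Mr unfolding mem_frakE_iff mem_frakC_iff by (intro eq_matI) (auto simp: carrier_matD)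
  moreover have "Mr \<in> frakE n Mr r" using Mr unfolding mem_frakE_iff by simp
  ultimately show ?thesis by blast
qed

lemma det_tilde_pos_of_max_det_succ:
  assumes "n mod 4 = 3" "n > 3" "dim_row Mr \<le> Suc l"
    and F: "F \<in> frakE n Mr (Suc l)" "det F = Max (det ` frakE n Mr (Suc l))" "det (tilde F) > 0"
    and E: "E \<in> frakE n Mr (Suc (Suc l))" "det E = Max (det ` frakE n Mr (Suc (Suc l)))"
  shows "det (tilde E) > 0"
proof -
  have fin: "finite (det ` frakE n Mr k)" for k using finite_frakE by simp
  from F have Fc: "F \<in> carrier_mat (Suc l) (Suc l)" and "F $$ (l,l) = n"
    unfolding mem_frakE_iff mem_frakC_iff by auto
  let ?T = "twin_ext F" and ?E' = "mat_delete E (Suc l) (Suc l)"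
  have T: "?T \<in> frakE n Mr (Suc (Suc l))" by (rule twin_ext_mem_frakE) (use assms in auto)
  have "det (tilde ?T) = (n - 3) * det (tilde F)"
    unfolding tilde_eq_set_last_diag det_set_last_diag_twin_ext[OF Fc] \<open>F $$ (l,l) = n\<close> ..
  moreover have "det (tilde ?T) = det ?T - (n - 3) * det F"
    using det_tilde_eq[of ?T n "Suc l"] T mat_delete_twin_ext[OF Fc] unfolding mem_frakE_iff by simp
  moreover have "det (tilde E) = det E - (n - 3) * det ?E'"
    using det_tilde_eq E unfolding mem_frakE_iff by blast
  moreover have "det ?T \<le> det E" using E T fin by simp
  moreover have "det ?E' \<le> det F"
    using F mat_delete_mem_frakE[OF E(1)] \<open>dim_row Mr \<le> Suc l\<close> fin by simp
  then have "(n - 3) * det ?E' \<le> (n - 3) * det F" using \<open>n > 3\<close> by (intro mult_left_mono) auto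
  moreover have "(n - 3) * det (tilde F) > 0" using \<open>n > 3\<close> \<open>det (tilde F) > 0\<close> by simp
  ultimately show ?thesis by linarith
qed

lemma frakE_max_det_tilde_pos:
  assumes "n mod 4 = 3" "n > 3" "1 \<le> r" "Mr \<in> frakC n r" "det (tilde Mr) > 0" "r \<le> k"
  shows "frakE n Mr k \<noteq> {} \<and>
    (\<forall>E \<in> frakE n Mr k. det E = Max (det ` frakE n Mr k) \<longrightarrow> det (tilde E) > 0)"
  using \<open>r \<le> k\<close>
proof (induction k rule: dec_induct)
  case base
  then show ?case using assms frakE_eq_singleton by simp
next
  case (step k)
  obtain l where k: "k = Suc l" using step.hyps \<open>1 \<le> r\<close> by (cases k) auto
  have dim: "dim_row Mr \<le> Suc l" using assms(4) step.hyps k unfolding mem_frakC_iff by auto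
  have "Max (det ` frakE n Mr k) \<in> det ` frakE n Mr k"
    using Max_in finite_frakE step.IH by simp
  then obtain F where F: "F \<in> frakE n Mr (Suc l)" "det F = Max (det ` frakE n Mr (Suc l))"
    unfolding k by auto
  moreover from F have "det (tilde F) > 0" using step.IH unfolding k by blast
  ultimately have "twin_ext F \<in> frakE n Mr (Suc (Suc l))"
    using twin_ext_mem_frakE[OF assms(1,2) F(1) dim] by blast
  moreover have "det (tilde E) > 0"
    if "E \<in> frakE n Mr (Suc (Suc l))" "det E = Max (det ` frakE n Mr (Suc (Suc l)))" for E
    using det_tilde_pos_of_max_det_succ[OF assms(1,2) dim F \<open>det (tilde F) > 0\<close> that] .
  ultimately show ?case unfolding k by blast
qed

theorem corollary1:
  fixes n :: int and r m :: nat and Mr Estar :: "int mat"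
  assumes "n mod 4 = 3" and "n > 3"
    and "1 \<le> r" and "r \<le> m"
    and "Mr \<in> frakC n r"
    and "det (tilde Mr) > 0"
    and "Estar \<in> frakE n Mr m"
    and "det Estar = Max (det ` frakE n Mr m)"
  shows "det (tilde Estar) > 0"
  using frakE_max_det_tilde_pos[OF assms(1,2,3,5,6,4)] assms(7,8) by blast

end
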